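(* For generic $a,b,c\in\mathbb{C}$ define $\hat{\mathbf Q}_0(n;a;b,c)\equiv1$ and, for $k\ge1$, $\hat{\mathbf Q}_k(n;a;b,c)$ by the $k$-raising relation $$(k+\tfrac a2)(1+a)bc\,(n+\tfrac a2)\,\hat{\mathbf Q}_k(n;a;b,c)=(n+k+\tfrac a2)(n+a)(n+b)(n+c)(n+\tfrac12+\tfrac a2)\,\hat{\mathbf Q}_{k-1}(n;a+1;b+1,c+1)$$ $$\qquad+(n-k+\tfrac a2)\,n\,(n+a-b)(n+a-c)(n-\tfrac12+\tfrac a2)\,\hat{\mathbf Q}_{k-1}(n-1;a+1;b+1,c+1).$$ Then each $\hat{\mathbf Q}_k$ is a polynomial in $n$ of degree $4k$ (of degree $2k$ in $\lambda=n(n+a)$), and, setting $\mathbf Q_k^{(2)}(n;a;b,c)=(1+\tfrac{2n}{a})\hat{\mathbf Q}_k(n;a;b,c)$, for all integers $k\ge0$ one has near $x=0$ $${}_3F_2\!\left[\begin{matrix}\tfrac12+k+\tfrac a2,\ 1+k+\tfrac a2,\ 1-k+a-b-c\\ 1+a-b,\ 1+a-c\end{matrix}\,\Big|\,-\frac{4x}{(1-x)^2}\right]=(1+x)^{-1-2k}(1-x)^{1+2k+a}\sum_{n=0}^\infty\frac{(a)_n(b)_n(c)_n}{n!\,(1+a-b)_n(1+a-c)_n}\,\mathbf Q_k^{(2)}(n;a;b,c)\,x^n.$$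
   Context: $(c)_n$ denotes the Pochhammer symbol, $(c)_0=1$; ${}_pF_q$ is the generalized hypergeometric series. Parameters are generic: no lower parameter is a nonpositive integer and the divisions in the recurrence are by nonzero constants. *)

theory Defs
  imports "HOL-Analysis.Analysis" "HOL-Computational_Algebra.Polynomial"
begin

definition hyp3F2 :: "complex \<Rightarrow> complex \<Rightarrow> complex \<Rightarrow> complex \<Rightarrow> complex \<Rightarrow> complex \<Rightarrow> complex" where
  "hyp3F2 a1 a2 a3 b1 b2 z =
     (\<Sum>n. pochhammer a1 n * pochhammer a2 n * pochhammer a3 n
            / (pochhammer b1 n * pochhammer b2 n * fact n) * z ^ n)"

text \<open>The polynomials hat Q_k(n;a;b,c) in the variable n, defined by the k-raising relation:
  the right-hand side is divided (as a polynomial) by the constant times (n + a/2).\<close>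
fun Qhat :: "nat \<Rightarrow> complex \<Rightarrow> complex \<Rightarrow> complex \<Rightarrow> complex poly" where
  "Qhat 0 a b c = 1"
| "Qhat (Suc k) a b c =
     (let K = of_nat (Suc k) :: complex; Q = Qhat k (a+1) (b+1) (c+1) in
       ([:K + a/2, 1:] * [:a, 1:] * [:b, 1:] * [:c, 1:] * [:1/2 + a/2, 1:] * Q
        + [:a/2 - K, 1:] * [:0, 1:] * [:a - b, 1:] * [:a - c, 1:] * [:a/2 - 1/2, 1:]
            * pcompose Q [:-1, 1:])
       div smult ((K + a/2) * (1 + a) * b * c) [:a/2, 1:])"

end

(*
  Both sides are compared as formal power series in x, by induction on k, with (a, b, c) replaced
  by (a+1, b+1, c+1) in the induction hypothesis. For k = 0, expanding the 3F2 in powers of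
  z = -4x/(1-x)^2 turns the coefficient of x^n into a terminating balanced 3F2 at 1, which the
  Pfaff-Saalschuetz summation (proved by a WZ pair) evaluates. For the step, the 3F2 of level k+1
  is obtained from that of level k with shifted parameters by raising an upper parameter alpha,
  F' = F + z F_z / alpha, and under z = -4x/(1-x)^2 the operator z d/dz becomes
  x (1-x)/(1+x) d/dx. After removing the prefactor this becomes the first order relation
  alpha U' = (alpha + beta x) U + x (1+x) U_x between the series on the right, and its coefficientwise
  form is exactly the k-raising relation defining hat Q.
  The polynomial claims follow by induction from the symmetry hat Q_k(-n-a) = hat Q_k(n): it makes the
  numerator of the raising relation odd about n = -a/2, so the division defining hat Q_(k+1) is
  exact and raises the degree by 4, and a polynomial invariant under n -> -n-a is a polynomial in
  n(n+a).
*)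
theory Submission
  imports Defs "HOL-Complex_Analysis.Complex_Analysis"
begin

section \<open>The polynomials Qhat\<close>

lemma not_Ints_add_of_nat_neq_0:
  fixes z :: "'a::ring_1"
  assumes "z \<notin> \<int>"
  shows "z + of_nat n \<noteq> 0"
proof
  assume "z + of_nat n = 0"
  then have "z = - of_nat n" by (simp add: add_eq_0_iff)
  with assms show False by simp
qed

lemma not_Ints_of_nat_add_half_neq_0:
  fixes z :: "'a::field_char_0"
  assumes "z \<notin> \<int>"
  shows "of_nat n + z / 2 \<noteq> 0"
proof
  assume "of_nat n + z / 2 = 0"
  then have "z = - of_int (2 * int n)" by (simp add: field_simps add_eq_0_iff)
  with assms show False by (metis Ints_minus Ints_of_int)
qed

definition raising_numerator :: "'a::field_char_0 \<Rightarrow> 'a \<Rightarrow> 'a \<Rightarrow> 'a \<Rightarrow> 'a poly \<Rightarrow> 'a poly" where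
  "raising_numerator K a b c Q =
     [:K + a/2, 1:] * [:a, 1:] * [:b, 1:] * [:c, 1:] * [:1/2 + a/2, 1:] * Q
     + [:a/2 - K, 1:] * [:0, 1:] * [:a - b, 1:] * [:a - c, 1:] * [:a/2 - 1/2, 1:] * pcompose Q [:-1, 1:]"

lemma Qhat_Suc_eq_div:
  "Qhat (Suc k) a b c = raising_numerator (of_nat (Suc k)) a b c (Qhat k (a+1) (b+1) (c+1))
     div smult ((of_nat (Suc k) + a/2) * (1 + a) * b * c) [:a/2, 1:]"
  by (simp only: Qhat.simps raising_numerator_def Let_def)

declare Qhat.simps(2) [simp del]

lemma poly_raising_numerator:
  "poly (raising_numerator K a b c Q) x =
     (x + K + a/2) * (x + a) * (x + b) * (x + c) * (x + 1/2 + a/2) * poly Q x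
     + (x - K + a/2) * x * (x + a - b) * (x + a - c) * (x - 1/2 + a/2) * poly Q (x - 1)"
  unfolding raising_numerator_def poly_add poly_mult poly_pcompose by (simp add: algebra_simps)

lemma poly_smult_monic_linear_mult:
  fixes C :: "'a::comm_ring_1"
  shows "poly (smult C [:u, 1:] * P) x = C * (x + u) * poly P x"
  by (simp add: algebra_simps)

lemma degree_raising_numerator:
  fixes Q :: "'a::field_char_0 poly"
  assumes "Q \<noteq> 0"
  shows "degree (raising_numerator K a b c Q) = degree Q + 5"
proof -
  let ?T1 = "[:K + a/2, 1:] * [:a, 1:] * [:b, 1:] * [:c, 1:] * [:1/2 + a/2, 1:] * Q"
  let ?T2 = "[:a/2 - K, 1:] * [:0, 1:] * [:a - b, 1:] * [:a - c, 1:] * [:a/2 - 1/2, 1:] * pcompose Q [:-1, 1:]"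
  have "pcompose Q [:-1, 1:] \<noteq> 0" using assms by (simp add: pcompose_eq_0_iff)
  then have deg: "degree ?T1 = degree Q + 5" "degree ?T2 = degree Q + 5"
    using assms by (simp_all add: degree_mult_eq degree_pcompose del: mult_pCons_left mult_pCons_right)
  have "lead_coeff ?T1 = lead_coeff Q" "lead_coeff ?T2 = lead_coeff Q"
    by (simp_all add: lead_coeff_mult lead_coeff_comp del: mult_pCons_left mult_pCons_right)
  then have "coeff (raising_numerator K a b c Q) (degree Q + 5) = 2 * lead_coeff Q"
    unfolding raising_numerator_def coeff_add using deg by simp
  then have "degree (raising_numerator K a b c Q) \<ge> degree Q + 5"
    using assms by (intro le_degree) simp
  moreover have "degree (raising_numerator K a b c Q) \<le> degree Q + 5"
    unfolding raising_numerator_def using deg by (intro degree_add_le) simp_all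
  ultimately show ?thesis by simp
qed

(* Since Q is invariant under x -> -x-a-1, the reflection x -> -x-a swaps the two summands up to sign. *)
lemma poly_raising_numerator_reflect:
  fixes Q :: "'a::field_char_0 poly"
  assumes "\<And>x. poly Q (-x - (a+1)) = poly Q x"
  shows "poly (raising_numerator K a b c Q) (-x - a) = - poly (raising_numerator K a b c Q) x"
proof -
  have "poly Q (-x - a) = poly Q (-(x - 1) - (a + 1))" "poly Q (-x - a - 1) = poly Q (-x - (a + 1))"
    by (rule arg_cong[where f = "poly Q"], algebra)+
  then have "poly Q (-x - a) = poly Q (x - 1)" "poly Q (-x - a - 1) = poly Q x"
    by (simp_all only: assms)
  then show ?thesis unfolding poly_raising_numerator by (simp add: field_simps)
qed

lemma poly_reflect_quotient:
  fixes C a :: "'a::field_char_0"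
  assumes "C \<noteq> 0" "\<And>y. C * (y + a/2) * poly P y = poly N y" "\<And>y. poly N (-y - a) = - poly N y"
  shows "poly P (-x - a) = poly P x"
proof (cases "x + a/2 = 0")
  case True
  then have "-x - a = x" by (simp add: field_simps add_eq_0_iff)
  then show ?thesis by (simp only:)
next
  case False
  have "-x - a + a/2 = -(x + a/2)" by (simp add: field_simps)
  then have "C * (x + a/2) * poly P (-x - a) = - (C * (-x - a + a/2) * poly P (-x - a))"
    by (simp only: mult_minus_left mult_minus_right minus_minus)
  also have "\<dots> = C * (x + a/2) * poly P x"
    by (simp only: assms(2,3) minus_minus)
  finally show ?thesis using assms(1) False by simp
qed

(* The numerator is odd about -a/2, so it vanishes there and the division defining Qhat is exact. *)
lemma Qhat_Suc_raising:
  assumes "a \<notin> \<int>" "b \<notin> \<int>" "c \<notin> \<int>"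
    and "\<And>x. poly (Qhat k (a+1) (b+1) (c+1)) (-x - (a+1)) = poly (Qhat k (a+1) (b+1) (c+1)) x"
  shows "smult ((of_nat (Suc k) + a/2) * (1 + a) * b * c) [:a/2, 1:] * Qhat (Suc k) a b c
     = raising_numerator (of_nat (Suc k)) a b c (Qhat k (a+1) (b+1) (c+1))"
proof -
  let ?N = "raising_numerator (of_nat (Suc k)) a b c (Qhat k (a+1) (b+1) (c+1))"
  have "1 + a \<noteq> 0"
    using not_Ints_add_of_nat_neq_0[OF assms(1), of 1] by (simp add: add.commute)
  then have C: "(of_nat (Suc k) + a/2) * (1 + a) * b * c \<noteq> 0"
    using assms(1-3) not_Ints_of_nat_add_half_neq_0[OF assms(1), of "Suc k"] by auto
  have "poly ?N (-a/2) = - poly ?N (-a/2)"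
    using poly_raising_numerator_reflect[OF assms(4), where x = "-a/2"] by simp
  then have "[:a/2, 1:] dvd ?N"
    using poly_eq_0_iff_dvd[of ?N "-a/2"] by simp
  then have "smult ((of_nat (Suc k) + a/2) * (1 + a) * b * c) [:a/2, 1:] dvd ?N"
    using C by (subst smult_dvd_iff) simp
  then show ?thesis unfolding Qhat_Suc_eq_div by (rule dvd_mult_div_cancel)
qed

lemma Qhat_invariants:
  assumes "a \<notin> \<int>" "b \<notin> \<int>" "c \<notin> \<int>"
  shows "Qhat k a b c \<noteq> 0 \<and> degree (Qhat k a b c) = 4 * k
    \<and> (\<forall>x. poly (Qhat k a b c) (-x - a) = poly (Qhat k a b c) x)"
  using assms
proof (induction k arbitrary: a b c)
  case 0
  then show ?case by simp
next
  case (Suc k)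
  let ?Q = "Qhat k (a+1) (b+1) (c+1)" and ?P = "Qhat (Suc k) a b c"
  let ?C = "(of_nat (Suc k) + a/2) * (1 + a) * b * c"
  let ?N = "raising_numerator (of_nat (Suc k)) a b c ?Q"
  have Q: "?Q \<noteq> 0" "degree ?Q = 4 * k" "\<And>x. poly ?Q (-x - (a+1)) = poly ?Q x"
    using Suc.IH[of "a+1" "b+1" "c+1"] Suc.prems by auto
  have eq: "smult ?C [:a/2, 1:] * ?P = ?N"
    by (rule Qhat_Suc_raising[OF Suc.prems Q(3)])
  have deg_N: "degree ?N = 4 * k + 5"
    using degree_raising_numerator[OF Q(1)] Q(2) by simp
  then have "?N \<noteq> 0" by auto
  then have C: "?C \<noteq> 0" and P: "?P \<noteq> 0" using eq by auto
  have "degree ?N = degree (smult ?C [:a/2, 1:]) + degree ?P"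
    unfolding eq[symmetric] using C P by (intro degree_mult_eq) simp_all
  then have "degree ?N = degree ?P + 1" using C by simp
  then have "degree ?P = 4 * Suc k" using deg_N by simp
  moreover have "poly ?P (-x - a) = poly ?P x" for x
  proof (rule poly_reflect_quotient[OF C])
    show "?C * (y + a/2) * poly ?P y = poly ?N y" for y
      using arg_cong[OF eq, of "\<lambda>p. poly p y"] unfolding poly_smult_monic_linear_mult .
  qed (rule poly_raising_numerator_reflect[OF Q(3)])
  ultimately show ?case using P by blast
qed

lemma Qhat_raising:
  assumes "a \<notin> \<int>" "b \<notin> \<int>" "c \<notin> \<int>"
  shows "(of_nat (Suc k) + a/2) * (1 + a) * b * c * (x + a/2) * poly (Qhat (Suc k) a b c) x
    = poly (raising_numerator (of_nat (Suc k)) a b c (Qhat k (a+1) (b+1) (c+1))) x"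
proof -
  have "\<And>x. poly (Qhat k (a+1) (b+1) (c+1)) (-x - (a+1)) = poly (Qhat k (a+1) (b+1) (c+1)) x"
    using Qhat_invariants[of "a+1" "b+1" "c+1" k] assms by simp
  from arg_cong[OF Qhat_Suc_raising[OF assms this], of "\<lambda>p. poly p x"]
  show ?thesis unfolding poly_smult_monic_linear_mult .
qed

lemma reflection_invariant_poly_eq_pcompose:
  fixes p :: "'a::field_char_0 poly"
  assumes "a \<noteq> 0" and "\<And>x. poly p (-x - a) = poly p x"
  shows "\<exists>R. p = R \<circ>\<^sub>p [:0, a, 1:]"
  using assms(2)
proof (induction "degree p" arbitrary: p rule: less_induct)
  case less
  define L where "L = [:0, a, 1:]"
  define q where "q = p div L"
  define r where "r = p mod L"
  have L: "L \<noteq> 0" "degree L = 2" "\<And>x. poly L (-x - a) = poly L x" "poly L 0 = 0"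
    unfolding L_def by (auto simp: algebra_simps)
  have p: "p = q * L + r" unfolding q_def r_def by simp
  have neg: "-a - x = -x - a" for x by simp
  have "degree r \<le> 1" using degree_mod_less[OF L(1), of p] L(2) unfolding r_def by auto
  then have "r = [:coeff r 0, coeff r 1:]"
    by (intro poly_eqI) (auto simp: coeff_pCons coeff_eq_0 split: nat.split)
  then obtain r0 r1 where r: "r = [:r0, r1:]" by blast
  have "poly L (-a) = 0" using L(3)[of 0] L(4) by simp
  then have "poly r (-a) = poly r 0" using less.prems[of 0] L(4) by (simp add: p)
  then have r0: "r = [:r0:]" using assms(1) by (simp add: r)
  have "poly (q \<circ>\<^sub>p [:-a, -1:] * L) x = poly (q * L) x" for x
    using less.prems[of x] L(3)[of x] by (subst (asm) (1 2) p) (simp add: r0 poly_pcompose neg)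
  then have "q \<circ>\<^sub>p [:-a, -1:] * L = q * L" by (simp add: poly_eq_poly_eq_iff[symmetric] fun_eq_iff)
  then have q_reflect: "q \<circ>\<^sub>p [:-a, -1:] = q" using L(1) by simp
  have q: "poly q (-x - a) = poly q x" for x
    using arg_cong[OF q_reflect, of "\<lambda>p. poly p x"] by (simp add: poly_pcompose neg)
  show ?case
  proof (cases "q = 0")
    case True
    then have "p = [:r0:] \<circ>\<^sub>p L" using p r0 by simp
    then show ?thesis unfolding L_def by blast
  next
    case False
    then have "degree p = degree q + 2"
      using L(1,2) by (simp add: p r0 degree_add_eq_left degree_mult_eq)
    then obtain R where "q = R \<circ>\<^sub>p L" using less.hyps[OF _ q] unfolding L_def by fastforce
    then have "p = pCons r0 R \<circ>\<^sub>p L" by (simp add: p r0 pcompose_pCons algebra_simps)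
    then show ?thesis unfolding L_def by blast
  qed
qed

lemma Qhat_raising_relation:
  assumes "a \<notin> \<int>" "b \<notin> \<int>" "c \<notin> \<int>" "k \<ge> 1"
  shows "(of_nat k + a/2) * (1 + a) * b * c * (n + a/2) * poly (Qhat k a b c) n
    = (n + of_nat k + a/2) * (n + a) * (n + b) * (n + c) * (n + 1/2 + a/2)
        * poly (Qhat (k - 1) (a+1) (b+1) (c+1)) n
    + (n - of_nat k + a/2) * n * (n + a - b) * (n + a - c) * (n - 1/2 + a/2)
        * poly (Qhat (k - 1) (a+1) (b+1) (c+1)) (n - 1)"
  using Qhat_raising[OF assms(1-3)] assms(4) unfolding poly_raising_numerator
  by (cases k) simp_all

lemma Qhat_eq_pcompose:
  assumes "a \<notin> \<int>" "b \<notin> \<int>" "c \<notin> \<int>"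
  shows "\<exists>R. degree R = 2 * k \<and> Qhat k a b c = pcompose R [:0, a, 1:]"
proof -
  have Q: "degree (Qhat k a b c) = 4 * k" "\<And>x. poly (Qhat k a b c) (-x - a) = poly (Qhat k a b c) x"
    using Qhat_invariants[OF assms] by auto
  have "a \<noteq> 0" using assms(1) by auto
  then obtain R where "Qhat k a b c = R \<circ>\<^sub>p [:0, a, 1:]"
    using reflection_invariant_poly_eq_pcompose Q(2) by blast
  with Q(1) show ?thesis by (intro exI[of _ R]) (simp add: degree_pcompose)
qed

section \<open>Pfaff-Saalschuetz summation\<close>

definition hyp3F2_coeff :: "'a::field_char_0 \<Rightarrow> 'a \<Rightarrow> 'a \<Rightarrow> 'a \<Rightarrow> 'a \<Rightarrow> nat \<Rightarrow> 'a" where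
  "hyp3F2_coeff a1 a2 a3 b1 b2 n =
     pochhammer a1 n * pochhammer a2 n * pochhammer a3 n / (pochhammer b1 n * pochhammer b2 n * fact n)"

lemma hyp3F2_coeff_0 [simp]: "hyp3F2_coeff a1 a2 a3 b1 b2 0 = 1"
  by (simp add: hyp3F2_coeff_def)

lemma hyp3F2_coeff_commute: "hyp3F2_coeff a1 a2 a3 b1 b2 n = hyp3F2_coeff a2 a1 a3 b1 b2 n"
  by (simp add: hyp3F2_coeff_def mult_ac)

lemma hyp3F2_coeff_Suc:
  "hyp3F2_coeff a1 a2 a3 b1 b2 (Suc n) = hyp3F2_coeff a1 a2 a3 b1 b2 n
     * ((a1 + of_nat n) * (a2 + of_nat n) * (a3 + of_nat n) / ((b1 + of_nat n) * (b2 + of_nat n) * (of_nat n + 1)))"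
proof -
  have "of_nat (Suc n) = (of_nat n + 1 :: 'a)" by simp
  then show ?thesis
    by (simp only: hyp3F2_coeff_def pochhammer_Suc fact_Suc of_nat_mult times_divide_times_eq mult_ac)
qed

lemma pochhammer_plus_1_mult: "z * pochhammer (z + 1) n = (z + of_nat n) * pochhammer z n"
  by (metis pochhammer_rec pochhammer_rec')

lemma hyp3F2_coeff_raise:
  "a1 * hyp3F2_coeff (a1 + 1) a2 a3 b1 b2 n = (a1 + of_nat n) * hyp3F2_coeff a1 a2 a3 b1 b2 n"
  using pochhammer_plus_1_mult[of a1 n] by (simp add: hyp3F2_coeff_def)

lemma hyp3F2_coeff_well_poised_shift:
  "a * b * c * hyp3F2_coeff (a + 1) (b + 1) (c + 1) (1 + a - b) (1 + a - c) n
    = (a + of_nat n) * (b + of_nat n) * (c + of_nat n) * hyp3F2_coeff a b c (1 + a - b) (1 + a - c) n"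
proof -
  have "a * b * c * hyp3F2_coeff (a + 1) (b + 1) (c + 1) (1 + a - b) (1 + a - c) n
    = (a * pochhammer (a + 1) n) * (b * pochhammer (b + 1) n) * (c * pochhammer (c + 1) n)
      / (pochhammer (1 + a - b) n * pochhammer (1 + a - c) n * fact n)"
    by (simp add: hyp3F2_coeff_def mult_ac)
  then show ?thesis unfolding pochhammer_plus_1_mult by (simp add: hyp3F2_coeff_def mult_ac)
qed

(* Certificate of the WZ pair proving the Pfaff-Saalschuetz sum; the upper parameter -n-1 in place of -n
   keeps it from vanishing at i = n+1. *)
definition saalschutz_certificate :: "'a::field_char_0 \<Rightarrow> 'a \<Rightarrow> 'a \<Rightarrow> nat \<Rightarrow> nat \<Rightarrow> 'a" where
  "saalschutz_certificate a g d n i =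
     hyp3F2_coeff (- of_nat n - 1) (a + of_nat n) (g + d - 1 - a) g d i
       * of_nat i * (g - 1 + of_nat i) * (d - 1 + of_nat i)"

lemma saalschutz_rational_identity:
  fixes a g d N x :: "'a::field_char_0"
  assumes "a + N \<noteq> 0" "g + N \<noteq> 0" "d + N \<noteq> 0" "N + 1 \<noteq> 0"
  shows "(a + N + x) / (a + N) - (1 + a - g + N) * (1 + a - d + N) / ((g + N) * (d + N)) * ((N + 1 - x) / (N + 1))
    = (2 * N + 1 + a) / ((N + 1) * (g + N) * (d + N) * (a + N))
      * (x * (g - 1 + x) * (d - 1 + x) - (x - N - 1) * (a + N + x) * (g + d - 1 - a + x))"
proof -
  have "inverse (a + N) * (a + N) = 1" "inverse (g + N) * (g + N) = 1"
    "inverse (d + N) * (d + N) = 1" "inverse (N + 1) * (N + 1) = 1"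
    using assms by simp_all
  then show ?thesis unfolding divide_inverse inverse_mult_distrib by algebra
qed

lemma saalschutz_wz_step:
  fixes a g d :: "'a::field_char_0"
  defines "t \<equiv> \<lambda>n i. hyp3F2_coeff (- of_nat n) (a + of_nat n) (g + d - 1 - a) g d i"
  assumes "a + of_nat n \<noteq> 0" "g + of_nat n \<noteq> 0" "d + of_nat n \<noteq> 0"
    and "g + of_nat i \<noteq> 0" "d + of_nat i \<noteq> 0"
  shows "t (Suc n) i - (1 + a - g + of_nat n) * (1 + a - d + of_nat n) / ((g + of_nat n) * (d + of_nat n)) * t n i
    = (2 * of_nat n + 1 + a) / ((of_nat n + 1) * (g + of_nat n) * (d + of_nat n) * (a + of_nat n))
      * (saalschutz_certificate a g d n i - saalschutz_certificate a g d n (Suc i))"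
proof -
  define w where "w = hyp3F2_coeff (- of_nat n - 1) (a + of_nat n) (g + d - 1 - a) g d i"
  have n1: "(of_nat n + 1 :: 'a) \<noteq> 0"
    by (metis add.commute of_nat_Suc of_nat_neq_0)
  have sn: "- of_nat (Suc n) = (- of_nat n - 1 :: 'a)" "a + of_nat (Suc n) = a + of_nat n + 1"
    by simp_all
  have "(a + of_nat n) * hyp3F2_coeff (a + of_nat n + 1) (- of_nat n - 1) (g + d - 1 - a) g d i
      = (a + of_nat n + of_nat i) * hyp3F2_coeff (a + of_nat n) (- of_nat n - 1) (g + d - 1 - a) g d i"
    by (rule hyp3F2_coeff_raise)
  then have t1: "t (Suc n) i = w * ((a + of_nat n + of_nat i) / (a + of_nat n))"
    using assms(2) unfolding t_def w_def sn
    by (subst (1 2) hyp3F2_coeff_commute) (simp add: field_simps)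
  have "(- of_nat n - 1) * hyp3F2_coeff (- of_nat n - 1 + 1) (a + of_nat n) (g + d - 1 - a) g d i
      = (- of_nat n - 1 + of_nat i) * w"
    unfolding w_def by (rule hyp3F2_coeff_raise)
  then have t0: "t n i = w * ((of_nat n + 1 - of_nat i) / (of_nat n + 1))"
    using n1 unfolding t_def by (simp add: field_simps)
  have c0: "saalschutz_certificate a g d n i = w * (of_nat i * (g - 1 + of_nat i) * (d - 1 + of_nat i))"
    unfolding saalschutz_certificate_def w_def by (simp only: mult.assoc)
  have sc: "of_nat (Suc i) = (of_nat i + 1 :: 'a)"
    "g - 1 + of_nat (Suc i) = g + of_nat i" "d - 1 + of_nat (Suc i) = d + of_nat i"
    by simp_all
  have "(g + of_nat i) * (d + of_nat i) * (of_nat i + 1) \<noteq> 0"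
    using assms(5,6) by (metis add.commute mult_eq_0_iff of_nat_Suc of_nat_neq_0)
  then have c1: "saalschutz_certificate a g d n (Suc i)
      = w * ((of_nat i - of_nat n - 1) * (a + of_nat n + of_nat i) * (g + d - 1 - a + of_nat i))"
    unfolding saalschutz_certificate_def hyp3F2_coeff_Suc w_def[symmetric] sc
    by (simp add: field_simps)
  show ?thesis
    unfolding t1 t0 c0 c1 mult.left_commute[of _ w] right_diff_distrib[symmetric]
    unfolding saalschutz_rational_identity[OF assms(2-4) n1]
    by (simp only: right_diff_distrib[symmetric] mult.left_commute)
qed

theorem pfaff_saalschutz:
  fixes a g d :: "'a::field_char_0"
  assumes "\<And>m. a + of_nat m \<noteq> 0" "\<And>m. g + of_nat m \<noteq> 0" "\<And>m. d + of_nat m \<noteq> 0"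
  shows "(\<Sum>i\<le>n. hyp3F2_coeff (- of_nat n) (a + of_nat n) (g + d - 1 - a) g d i)
    = pochhammer (1 + a - g) n * pochhammer (1 + a - d) n / (pochhammer g n * pochhammer d n)"
proof (induction n)
  case 0
  then show ?case by simp
next
  case (Suc n)
  define t where "t = (\<lambda>n i. hyp3F2_coeff (- of_nat n) (a + of_nat n) (g + d - 1 - a) g d i)"
  define \<rho> where "\<rho> = (1 + a - g + of_nat n) * (1 + a - d + of_nat n) / ((g + of_nat n) * (d + of_nat n))"
  define \<kappa> where "\<kappa> = (2 * of_nat n + 1 + a) / ((of_nat n + 1) * (g + of_nat n) * (d + of_nat n) * (a + of_nat n))"
  let ?G = "saalschutz_certificate a g d n"
  have "t (Suc n) i - \<rho> * t n i = \<kappa> * (?G i - ?G (Suc i))" for i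
    unfolding t_def \<rho>_def \<kappa>_def by (rule saalschutz_wz_step) (use assms in auto)
  then have "(\<Sum>i\<le>Suc n. t (Suc n) i) = (\<Sum>i\<le>Suc n. \<rho> * t n i + \<kappa> * (?G i - ?G (Suc i)))"
    by (simp add: diff_eq_eq add.commute)
  also have "\<dots> = \<rho> * (\<Sum>i\<le>Suc n. t n i) + \<kappa> * (?G 0 - ?G (Suc (Suc n)))"
    by (simp only: sum.distrib sum_distrib_left[symmetric] sum_telescope)
  also have "?G (Suc (Suc n)) = 0"
  proof -
    have "- of_nat (Suc n) = (- of_nat n - 1 :: 'a)" by simp
    then have "pochhammer (- of_nat n - 1 :: 'a) (Suc (Suc n)) = 0"
      using pochhammer_of_nat_eq_0_lemma[of "Suc n" "Suc (Suc n)", where 'a='a] by (simp only:)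
    then show ?thesis by (simp add: saalschutz_certificate_def hyp3F2_coeff_def)
  qed
  also have "?G 0 = 0" by (simp add: saalschutz_certificate_def)
  also have "(\<Sum>i\<le>Suc n. t n i) = (\<Sum>i\<le>n. t n i)"
    using pochhammer_of_nat_eq_0_lemma[of n "Suc n", where 'a='a] by (simp add: t_def hyp3F2_coeff_def)
  also have "\<dots> = pochhammer (1 + a - g) n * pochhammer (1 + a - d) n / (pochhammer g n * pochhammer d n)"
    using Suc.IH by (simp add: t_def)
  also have "\<rho> * \<dots> + \<kappa> * (0 - 0)
      = pochhammer (1 + a - g) (Suc n) * pochhammer (1 + a - d) (Suc n) / (pochhammer g (Suc n) * pochhammer d (Suc n))"
    unfolding \<rho>_def pochhammer_Suc by (simp only: diff_self mult_zero_right mult_zero_left add_0_right times_divide_times_eq mult_ac)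
  finally show ?case by (simp add: t_def)
qed

section \<open>Hypergeometric power series\<close>

definition fps_hyp3F2 :: "'a::field_char_0 \<Rightarrow> 'a \<Rightarrow> 'a \<Rightarrow> 'a \<Rightarrow> 'a \<Rightarrow> 'a fps" where
  "fps_hyp3F2 a1 a2 a3 b1 b2 = Abs_fps (hyp3F2_coeff a1 a2 a3 b1 b2)"

lemma hyp3F2_eq_eval_fps: "hyp3F2 a1 a2 a3 b1 b2 z = eval_fps (fps_hyp3F2 a1 a2 a3 b1 b2) z"
  by (simp add: hyp3F2_def eval_fps_def fps_hyp3F2_def hyp3F2_coeff_def)

lemma fps_hyp3F2_commute: "fps_hyp3F2 a1 a2 a3 b1 b2 = fps_hyp3F2 a2 a1 a3 b1 b2"
  unfolding fps_hyp3F2_def by (intro arg_cong[where f = Abs_fps] ext hyp3F2_coeff_commute)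

lemma fps_X_times_deriv_nth:
  fixes f :: "'a::comm_ring_1 fps"
  shows "(fps_X * fps_deriv f) $ n = of_nat n * f $ n"
  by (cases n) (simp_all add: fps_X_mult_nth)

lemma fps_hyp3F2_raise:
  fixes a1 :: "'a::field_char_0"
  shows "fps_const a1 * fps_hyp3F2 (a1 + 1) a2 a3 b1 b2
    = fps_const a1 * fps_hyp3F2 a1 a2 a3 b1 b2 + fps_X * fps_deriv (fps_hyp3F2 a1 a2 a3 b1 b2)"
proof (rule fps_ext)
  fix n
  have "a1 * hyp3F2_coeff (a1 + 1) a2 a3 b1 b2 n = (a1 + of_nat n) * hyp3F2_coeff a1 a2 a3 b1 b2 n"
    by (rule hyp3F2_coeff_raise)
  then show "(fps_const a1 * fps_hyp3F2 (a1 + 1) a2 a3 b1 b2) $ n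
    = (fps_const a1 * fps_hyp3F2 a1 a2 a3 b1 b2 + fps_X * fps_deriv (fps_hyp3F2 a1 a2 a3 b1 b2)) $ n"
    by (simp add: fps_hyp3F2_def fps_X_times_deriv_nth algebra_simps)
qed

lemma add_of_nat_divide_add_of_nat_tendsto_1:
  fixes x y :: "'a::real_normed_field"
  shows "(\<lambda>n. (x + of_nat n) / (y + of_nat n)) \<longlonglongrightarrow> 1"
proof -
  have inf: "filterlim (\<lambda>n. y + of_nat n) at_infinity sequentially"
    by (rule tendsto_add_filterlim_at_infinity[OF tendsto_const tendsto_of_nat])
  have "(\<lambda>n. 1 + (x - y) / (y + of_nat n)) \<longlonglongrightarrow> 1 + 0"
    by (rule tendsto_add[OF tendsto_const tendsto_divide_0[OF tendsto_const inf]])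
  moreover have "eventually (\<lambda>n. 1 + (x - y) / (y + of_nat n) = (x + of_nat n) / (y + of_nat n)) sequentially"
    using filterlim_at_infinity_imp_eventually_ne[OF inf, of 0] by eventually_elim (simp add: field_simps)
  ultimately show ?thesis by (simp add: tendsto_cong)
qed

lemma fps_conv_radius_hyp3F2_pos:
  fixes a1 a2 a3 b1 b2 :: "'a::{real_normed_field, banach}"
  shows "fps_conv_radius (fps_hyp3F2 a1 a2 a3 b1 b2) > 0"
proof -
  define t where "t = hyp3F2_coeff a1 a2 a3 b1 b2"
  define r where "r n = (a1 + of_nat n) / (b1 + of_nat n) * ((a2 + of_nat n) / (b2 + of_nat n))
    * ((a3 + of_nat n) / (1 + of_nat n))" for n
  have t_Suc: "t (Suc n) = t n * r n" for n
    unfolding t_def r_def hyp3F2_coeff_Suc by (simp add: add.commute)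
  have "r \<longlonglongrightarrow> 1 * 1 * 1"
    unfolding r_def by (intro tendsto_mult add_of_nat_divide_add_of_nat_tendsto_1)
  then have "(\<lambda>n. norm (r n)) \<longlonglongrightarrow> 1" by (auto dest: tendsto_norm)
  then have "eventually (\<lambda>n. norm (r n) < 2) sequentially"
    by (rule order_tendstoD(2)) simp
  then obtain N where N: "\<And>n. n \<ge> N \<Longrightarrow> norm (r n) < 2"
    unfolding eventually_sequentially by blast
  have "summable (\<lambda>n. t n * of_real (1/4) ^ n)"
  proof (rule summable_ratio_test[of "1/2" N])
    fix n assume "n \<ge> N"
    then have "norm (t n) * norm (r n) \<le> norm (t n) * 2"
      using N[of n] by (intro mult_left_mono) simp_all
    moreover have quarter: "norm (of_real (1/4) :: 'a) = 1/4" by simp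
    ultimately have "norm (t (Suc n) * of_real (1/4) ^ Suc n) \<le> norm (t n) * 2 * (1/4) ^ Suc n"
      unfolding t_Suc norm_mult norm_power quarter by (intro mult_right_mono) simp_all
    then show "norm (t (Suc n) * of_real (1/4) ^ Suc n) \<le> 1/2 * norm (t n * of_real (1/4) ^ n)"
      by (simp add: norm_mult norm_power)
  qed simp
  then have "fps_conv_radius (fps_hyp3F2 a1 a2 a3 b1 b2) \<ge> norm (of_real (1/4) :: 'a)"
    unfolding fps_conv_radius_def fps_hyp3F2_def t_def by (intro conv_radius_geI) simp
  then show ?thesis by (auto elim: less_le_trans[rotated])
qed

definition lhs_fps :: "nat \<Rightarrow> complex \<Rightarrow> complex \<Rightarrow> complex \<Rightarrow> complex fps" where
  "lhs_fps k a b c = fps_hyp3F2 (1/2 + of_nat k + a/2) (1 + of_nat k + a/2) (1 - of_nat k + a - b - c)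
     (1 + a - b) (1 + a - c)"

definition rhs_fps :: "nat \<Rightarrow> complex \<Rightarrow> complex \<Rightarrow> complex \<Rightarrow> complex fps" where
  "rhs_fps k a b c = Abs_fps (\<lambda>n. hyp3F2_coeff a b c (1 + a - b) (1 + a - c) n
     * ((1 + 2 * of_nat n / a) * poly (Qhat k a b c) (of_nat n)))"

lemma lhs_fps_Suc:
  fixes a b c :: complex and k :: nat
  defines "\<alpha> \<equiv> of_nat (Suc k) + a/2"
  shows "fps_const \<alpha> * lhs_fps (Suc k) a b c
    = fps_const \<alpha> * lhs_fps k (a+1) (b+1) (c+1) + fps_X * fps_deriv (lhs_fps k (a+1) (b+1) (c+1))"
proof -
  have "1/2 + of_nat (Suc k) + a/2 = \<alpha> + 1/2" "1 + of_nat (Suc k) + a/2 = \<alpha> + 1"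
    "1/2 + of_nat k + (a+1)/2 = \<alpha>" "1 + of_nat k + (a+1)/2 = \<alpha> + 1/2"
    "1 - of_nat k + (a+1) - (b+1) - (c+1) = 1 - of_nat (Suc k) + a - b - c"
    "1 + (a+1) - (b+1) = 1 + a - b" "1 + (a+1) - (c+1) = 1 + a - c"
    unfolding \<alpha>_def by (simp_all add: field_simps)
  then have "lhs_fps (Suc k) a b c = fps_hyp3F2 (\<alpha> + 1) (\<alpha> + 1/2) (1 - of_nat (Suc k) + a - b - c) (1 + a - b) (1 + a - c)"
    and "lhs_fps k (a+1) (b+1) (c+1) = fps_hyp3F2 \<alpha> (\<alpha> + 1/2) (1 - of_nat (Suc k) + a - b - c) (1 + a - b) (1 + a - c)"
    unfolding lhs_fps_def by (simp_all only: fps_hyp3F2_commute[of "\<alpha> + 1/2"])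
  then show ?thesis by (simp only: fps_hyp3F2_raise)
qed

lemma Qhat_raising_doubled:
  fixes a b c M :: complex and j :: nat
  assumes "a \<notin> \<int>" "b \<notin> \<int>" "c \<notin> \<int>"
  defines "\<alpha> \<equiv> of_nat (Suc j) + a/2" and "\<beta> \<equiv> 1 + a/2 - of_nat (Suc j)"
  shows "\<alpha> * b * c * (a + 1) * (a + 2 * (M + 1)) * poly (Qhat (Suc j) a b c) (M + 1)
    = (\<alpha> + (M + 1)) * (a + (M + 1)) * (b + (M + 1)) * (c + (M + 1)) * (a + 1 + 2 * (M + 1))
        * poly (Qhat j (a+1) (b+1) (c+1)) (M + 1)
    + (\<beta> + M) * (M + 1) * (1 + a - b + M) * (1 + a - c + M) * (a + 1 + 2 * M)
        * poly (Qhat j (a+1) (b+1) (c+1)) M"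
proof -
  have "M + 1 - 1 = M" by simp
  then have "\<alpha> * (1 + a) * b * c * (M + 1 + a/2) * poly (Qhat (Suc j) a b c) (M + 1)
      = (M + 1 + \<alpha>) * (M + 1 + a) * (M + 1 + b) * (M + 1 + c) * (M + 1 + 1/2 + a/2)
          * poly (Qhat j (a+1) (b+1) (c+1)) (M + 1)
      + (M + \<beta>) * (M + 1) * (M + 1 + a - b) * (M + 1 + a - c) * (M + 1 - 1/2 + a/2)
          * poly (Qhat j (a+1) (b+1) (c+1)) M"
    using Qhat_raising[OF assms(1-3), of j "M + 1"]
    unfolding poly_raising_numerator \<alpha>_def \<beta>_def by (simp add: algebra_simps)
  from arg_cong[OF this, of "\<lambda>y. 2 * y"] show ?thesis by (simp add: algebra_simps)
qed

lemma rhs_fps_nth_Suc: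
  fixes a b c :: complex and j m :: nat
  assumes "a \<notin> \<int>" "b \<notin> \<int>" "c \<notin> \<int>" "a - b \<notin> \<int>" "a - c \<notin> \<int>"
  defines "\<alpha> \<equiv> of_nat (Suc j) + a/2" and "\<beta> \<equiv> 1 + a/2 - of_nat (Suc j)"
    and "V \<equiv> rhs_fps j (a+1) (b+1) (c+1)"
  shows "\<alpha> * rhs_fps (Suc j) a b c $ Suc m = (\<alpha> + of_nat (Suc m)) * V $ Suc m + (\<beta> + of_nat m) * V $ m"
proof -
  define M where "M = (of_nat m :: complex)"
  define x where "x = M + 1"
  define A where "A = hyp3F2_coeff a b c (1 + a - b) (1 + a - c) m"
  define P where "P = poly (Qhat (Suc j) a b c) x"
  define Q1 where "Q1 = poly (Qhat j (a+1) (b+1) (c+1)) x"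
  define Q0 where "Q0 = poly (Qhat j (a+1) (b+1) (c+1)) M"
  have x: "of_nat (Suc m) = x" unfolding x_def M_def by simp
  have low: "1 + (a+1) - (b+1) = 1 + a - b" "1 + (a+1) - (c+1) = 1 + a - c" by simp_all
  have "1 + a - b \<notin> \<int>" "1 + a - c \<notin> \<int>"
    using assms(4,5) by (metis Ints_1 add_in_Ints_iff_left add_diff_eq)+
  then have nz: "a \<noteq> 0" "b \<noteq> 0" "c \<noteq> 0" "a + 1 \<noteq> 0" "M + 1 \<noteq> 0"
    "1 + a - b + M \<noteq> 0" "1 + a - c + M \<noteq> 0"
    using assms(1-3) not_Ints_add_of_nat_neq_0[of a 1] of_nat_neq_0[of m, where 'a=complex]
      not_Ints_add_of_nat_neq_0[of "1 + a - b" m] not_Ints_add_of_nat_neq_0[of "1 + a - c" m]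
    by (auto simp: M_def add.commute)
  have shift: "hyp3F2_coeff (a+1) (b+1) (c+1) (1 + a - b) (1 + a - c) m
      = A * ((a + M) * (b + M) * (c + M) / (a * b * c))"
    using hyp3F2_coeff_well_poised_shift[of a b c m] nz(1-3) unfolding A_def M_def
    by (simp add: field_simps)
  (* The three coefficients share the factor \<Phi>; what is left is twice the raising relation at m + 1. *)
  define \<Phi> where "\<Phi> = A * (a + M) * (b + M) * (c + M)
    / ((M + 1) * (1 + a - b + M) * (1 + a - c + M) * a * b * c * (a + 1))"
  have invs: "inverse a * a = 1" "inverse b * b = 1" "inverse c * c = 1" "inverse (a + 1) * (a + 1) = 1"
    "inverse (M + 1) * (M + 1) = 1" "inverse (1 + a - b + M) * (1 + a - b + M) = 1"
    "inverse (1 + a - c + M) * (1 + a - c + M) = 1"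
    using nz by auto
  have U: "\<alpha> * rhs_fps (Suc j) a b c $ Suc m = \<Phi> * (\<alpha> * b * c * (a + 1) * (a + 2 * x) * P)"
    unfolding rhs_fps_def fps_nth_Abs_fps hyp3F2_coeff_Suc x \<Phi>_def P_def A_def[symmetric] M_def[symmetric]
      divide_inverse inverse_mult_distrib
    using invs by algebra
  have V1: "(\<alpha> + of_nat (Suc m)) * V $ Suc m
      = \<Phi> * ((\<alpha> + x) * (a + x) * (b + x) * (c + x) * (a + 1 + 2 * x) * Q1)"
    unfolding V_def rhs_fps_def fps_nth_Abs_fps hyp3F2_coeff_Suc low shift x \<Phi>_def Q1_def
      M_def[symmetric] x_def divide_inverse inverse_mult_distrib
    using invs by algebra
  have V0: "(\<beta> + of_nat m) * V $ m
      = \<Phi> * ((\<beta> + M) * (M + 1) * (1 + a - b + M) * (1 + a - c + M) * (a + 1 + 2 * M) * Q0)"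
    unfolding V_def rhs_fps_def fps_nth_Abs_fps low shift \<Phi>_def Q0_def M_def[symmetric]
      divide_inverse inverse_mult_distrib
    using invs by algebra
  have core: "\<alpha> * b * c * (a + 1) * (a + 2 * x) * P
      = (\<alpha> + x) * (a + x) * (b + x) * (c + x) * (a + 1 + 2 * x) * Q1
      + (\<beta> + M) * (M + 1) * (1 + a - b + M) * (1 + a - c + M) * (a + 1 + 2 * M) * Q0"
    using Qhat_raising_doubled[OF assms(1-3), of j M]
    unfolding P_def Q1_def Q0_def x_def \<alpha>_def \<beta>_def .
  show ?thesis unfolding U V1 V0 core by (rule distrib_left)
qed

lemma rhs_fps_nth_0_Suc:
  fixes a b c :: complex
  assumes "a \<notin> \<int>" "b \<notin> \<int>" "c \<notin> \<int>"
  shows "rhs_fps (Suc j) a b c $ 0 = rhs_fps j (a+1) (b+1) (c+1) $ 0"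
proof -
  define C where "C = (of_nat (Suc j) + a/2) * (1 + a) * b * c"
  have "1 + a \<noteq> 0"
    using not_Ints_add_of_nat_neq_0[OF assms(1), of 1] by (simp add: add.commute)
  then have "C * (a/2) \<noteq> 0"
    using assms not_Ints_of_nat_add_half_neq_0[OF assms(1), of "Suc j"] unfolding C_def by auto
  moreover have "C * (a/2) * poly (Qhat (Suc j) a b c) 0 = C * (a/2) * poly (Qhat j (a+1) (b+1) (c+1)) 0"
    using Qhat_raising[OF assms, of j 0] unfolding poly_raising_numerator C_def by (simp add: algebra_simps)
  ultimately show ?thesis by (simp add: rhs_fps_def hyp3F2_coeff_def)
qed

lemma rhs_fps_Suc:
  fixes a b c :: complex and j :: nat
  assumes "a \<notin> \<int>" "b \<notin> \<int>" "c \<notin> \<int>" "a - b \<notin> \<int>" "a - c \<notin> \<int>"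
  defines "\<alpha> \<equiv> of_nat (Suc j) + a/2" and "\<beta> \<equiv> 1 + a/2 - of_nat (Suc j)"
    and "V \<equiv> rhs_fps j (a+1) (b+1) (c+1)"
  shows "fps_const \<alpha> * rhs_fps (Suc j) a b c
    = (fps_const \<alpha> + fps_const \<beta> * fps_X) * V + fps_X * ((1 + fps_X) * fps_deriv V)"
proof (rule fps_ext)
  fix n
  have "(fps_const \<alpha> + fps_const \<beta> * fps_X) * V + fps_X * ((1 + fps_X) * fps_deriv V)
    = fps_const \<alpha> * V + fps_X * (fps_const \<beta> * V) + fps_X * fps_deriv V + fps_X * (fps_X * fps_deriv V)"
    by (simp add: algebra_simps)
  then have rhs: "((fps_const \<alpha> + fps_const \<beta> * fps_X) * V + fps_X * ((1 + fps_X) * fps_deriv V)) $ n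
    = (\<alpha> + of_nat n) * V $ n + (if n = 0 then 0 else (\<beta> + of_nat (n - 1)) * V $ (n - 1))"
    by (cases n) (simp_all add: fps_X_times_deriv_nth algebra_simps)
  show "(fps_const \<alpha> * rhs_fps (Suc j) a b c) $ n
    = ((fps_const \<alpha> + fps_const \<beta> * fps_X) * V + fps_X * ((1 + fps_X) * fps_deriv V)) $ n"
    unfolding rhs using rhs_fps_nth_0_Suc[OF assms(1-3)] rhs_fps_nth_Suc[OF assms(1-5), of j]
    unfolding \<alpha>_def \<beta>_def V_def by (cases n) simp_all
qed

section \<open>The substitution z = -4x/(1-x)^2\<close>

lemma fps_deriv_fps_binomial: "fps_deriv (fps_binomial s) = fps_const s * fps_binomial (s - 1)"
proof (rule fps_ext)
  fix n
  show "fps_deriv (fps_binomial s) $ n = (fps_const s * fps_binomial (s - 1)) $ n"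
    using gbinomial_absorption[of n s] by simp
qed

definition fps_one_minus_X_powr :: "'a::field_char_0 \<Rightarrow> 'a fps" where
  "fps_one_minus_X_powr s = fps_binomial s oo - fps_X"

lemma fps_one_minus_X_powr_add:
  "fps_one_minus_X_powr (s + t) = fps_one_minus_X_powr s * fps_one_minus_X_powr t"
  unfolding fps_one_minus_X_powr_def fps_binomial_add_mult by (rule fps_compose_mult_distrib) simp

lemma fps_one_minus_X_powr_0 [simp]: "fps_one_minus_X_powr 0 = 1"
  by (simp add: fps_one_minus_X_powr_def)

lemma fps_one_minus_X_powr_1: "fps_one_minus_X_powr 1 = 1 - fps_X"
  unfolding fps_one_minus_X_powr_def fps_binomial_1 by (simp add: fps_compose_add_distrib)

lemma fps_one_minus_X_powr_nth:
  fixes s :: "'a::field_char_0"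
  shows "fps_one_minus_X_powr s $ n = pochhammer (- s) n / fact n"
  unfolding fps_one_minus_X_powr_def fps_compose_uminus' by (simp add: gbinomial_pochhammer)

lemma fps_one_minus_X_powr_power: "fps_one_minus_X_powr s ^ n = fps_one_minus_X_powr (of_nat n * s)"
proof (induction n)
  case (Suc n)
  have "fps_one_minus_X_powr s ^ Suc n = fps_one_minus_X_powr (s + of_nat n * s)"
    using Suc.IH by (simp add: fps_one_minus_X_powr_add)
  also have "s + of_nat n * s = of_nat (Suc n) * s" by (simp add: algebra_simps)
  finally show ?case .
qed simp

lemma fps_deriv_fps_one_minus_X_powr:
  "fps_deriv (fps_one_minus_X_powr s) = - (fps_const s * fps_one_minus_X_powr (s - 1))"
proof -
  have "fps_deriv (fps_one_minus_X_powr s) = (fps_deriv (fps_binomial s) oo - fps_X) * fps_deriv (- fps_X)"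
    unfolding fps_one_minus_X_powr_def by (rule fps_compose_deriv) simp
  also have "fps_deriv (fps_binomial s) oo - fps_X = fps_const s * fps_one_minus_X_powr (s - 1)"
    unfolding fps_deriv_fps_binomial fps_one_minus_X_powr_def by (rule fps_const_mult_apply_left[symmetric])
  finally show ?thesis by simp
qed

lemma has_fps_expansion_one_minus_powr:
  "(\<lambda>x::complex. (1 - x) powr s) has_fps_expansion fps_one_minus_X_powr s"
proof -
  have "((\<lambda>x. (1 + x) powr s) \<circ> (\<lambda>x::complex. - x)) has_fps_expansion (fps_binomial s oo - fps_X)"
    by (intro has_fps_expansion_compose fps_expansion_intros) simp_all
  then show ?thesis by (simp add: fps_one_minus_X_powr_def o_def)
qed

lemma fps_deriv_binomial_times_one_minus_X_powr:
  "(1 + fps_X) * (1 - fps_X) * fps_deriv (fps_binomial s * fps_one_minus_X_powr t)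
    = (fps_const s * (1 - fps_X) - fps_const t * (1 + fps_X)) * (fps_binomial s * fps_one_minus_X_powr t)"
proof -
  have B: "(1 + fps_X) * fps_binomial (s - 1) = fps_binomial s"
    using fps_binomial_add_mult[of "s - 1" 1] by (simp add: fps_binomial_1 mult.commute)
  have P: "(1 - fps_X) * fps_one_minus_X_powr (t - 1) = fps_one_minus_X_powr t"
    using fps_one_minus_X_powr_add[of "t - 1" 1] by (simp add: fps_one_minus_X_powr_1 mult.commute)
  have "(1 + fps_X) * (1 - fps_X) * fps_deriv (fps_binomial s * fps_one_minus_X_powr t)
    = fps_const s * (1 - fps_X) * fps_one_minus_X_powr t * ((1 + fps_X) * fps_binomial (s - 1))
      - fps_const t * (1 + fps_X) * fps_binomial s * ((1 - fps_X) * fps_one_minus_X_powr (t - 1))"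
    by (simp add: fps_deriv_fps_binomial fps_deriv_fps_one_minus_X_powr algebra_simps)
  also have "\<dots> = fps_const s * (1 - fps_X) * fps_one_minus_X_powr t * fps_binomial s
      - fps_const t * (1 + fps_X) * fps_binomial s * fps_one_minus_X_powr t"
    by (simp only: B P)
  finally show ?thesis by (simp add: algebra_simps)
qed

definition quadratic_subst_fps :: "'a::field_char_0 fps" where
  "quadratic_subst_fps = fps_const (-4) * fps_X * fps_one_minus_X_powr (-2)"

lemma quadratic_subst_fps_nth_0 [simp]: "quadratic_subst_fps $ 0 = 0"
  by (simp add: quadratic_subst_fps_def)

lemma quadratic_subst_fps_ODE:
  "(1 + fps_X) * quadratic_subst_fps = fps_X * (1 - fps_X) * fps_deriv (quadratic_subst_fps :: 'a::field_char_0 fps)"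
proof -
  have m2: "fps_one_minus_X_powr (-2) = (1 - fps_X) * fps_one_minus_X_powr (-3 :: 'a)"
    using fps_one_minus_X_powr_add[of 1 "-3 :: 'a"] by (simp add: fps_one_minus_X_powr_1)
  have "fps_deriv (fps_one_minus_X_powr (-2)) = - (fps_const (-2) * fps_one_minus_X_powr (-3 :: 'a))"
    using fps_deriv_fps_one_minus_X_powr[of "-2 :: 'a"] by simp
  also have "\<dots> = 2 * fps_one_minus_X_powr (-3)"
    by (simp only: minus_mult_left fps_const_neg minus_minus fps_numeral_fps_const)
  finally have d: "fps_deriv (fps_one_minus_X_powr (-2)) = 2 * fps_one_minus_X_powr (-3 :: 'a)" .
  have Z': "fps_deriv quadratic_subst_fps
    = fps_const (-4) * fps_one_minus_X_powr (-2) + fps_const (-4) * fps_X * (2 * fps_one_minus_X_powr (-3 :: 'a))"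
    unfolding quadratic_subst_fps_def by (simp add: d algebra_simps)
  show ?thesis unfolding Z' unfolding quadratic_subst_fps_def m2 by (simp add: algebra_simps)
qed

lemma fps_compose_quadratic_subst_X_deriv:
  fixes H :: "'a::field_char_0 fps"
  shows "(1 + fps_X) * ((fps_X * fps_deriv H) oo quadratic_subst_fps)
    = fps_X * (1 - fps_X) * fps_deriv (H oo quadratic_subst_fps)"
proof -
  have "(1 + fps_X) * ((fps_X * fps_deriv H) oo quadratic_subst_fps)
    = ((1 + fps_X) * quadratic_subst_fps) * (fps_deriv H oo quadratic_subst_fps)"
    by (simp add: fps_compose_mult_distrib mult.assoc)
  also have "\<dots> = fps_X * (1 - fps_X) * ((fps_deriv H oo quadratic_subst_fps) * fps_deriv quadratic_subst_fps)"
    unfolding quadratic_subst_fps_ODE by (simp only: mult_ac)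
  also have "\<dots> = fps_X * (1 - fps_X) * fps_deriv (H oo quadratic_subst_fps)"
    by (simp only: fps_compose_deriv[OF quadratic_subst_fps_nth_0])
  finally show ?thesis .
qed

lemma quadratic_subst_fps_power:
  "quadratic_subst_fps ^ i = fps_const ((-4) ^ i) * (fps_X ^ i * fps_one_minus_X_powr (- 2 * of_nat i))"
  unfolding quadratic_subst_fps_def power_mult_distrib fps_one_minus_X_powr_power
  by (simp add: fps_const_power algebra_simps)

lemma has_fps_expansion_quadratic_subst:
  "(\<lambda>x::complex. - 4 * x / (1 - x)^2) has_fps_expansion quadratic_subst_fps"
proof -
  have "inverse ((1 - fps_X)^2) = fps_one_minus_X_powr (-2 :: complex)"
  proof (rule fps_inverse_unique)
    show "(1 - fps_X)^2 * fps_one_minus_X_powr (-2) = (1 :: complex fps)"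
      using fps_one_minus_X_powr_add[of 2 "-2 :: complex"] fps_one_minus_X_powr_add[of 1 "1 :: complex"]
      by (simp add: fps_one_minus_X_powr_1 power2_eq_square)
  qed
  moreover have "(\<lambda>x::complex. inverse ((1 - x)^2)) has_fps_expansion inverse ((1 - fps_X)^2)"
    by (intro fps_expansion_intros) simp
  ultimately have "(\<lambda>x::complex. - 4 * x * inverse ((1 - x)^2)) has_fps_expansion quadratic_subst_fps"
    unfolding quadratic_subst_fps_def by (intro fps_expansion_intros) simp
  then show ?thesis by (simp add: divide_inverse)
qed

section \<open>The transformation\<close>

definition prefactor_fps :: "nat \<Rightarrow> 'a::field_char_0 \<Rightarrow> 'a fps" where
  "prefactor_fps k a = fps_binomial (- 1 - 2 * of_nat k) * fps_one_minus_X_powr (1 + 2 * of_nat k + a)"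

lemma prefactor_fps_Suc:
  "(1 + fps_X)^2 * prefactor_fps (Suc k) a = (1 - fps_X) * prefactor_fps k (a + 1)"
proof -
  have "fps_binomial (2::'a) = (1 + fps_X)^2"
    using fps_binomial_of_nat[of 2, where 'a='a] by simp
  then have "(1 + fps_X)^2 * fps_binomial (- 1 - 2 * of_nat (Suc k)) = fps_binomial (2 + (- 1 - 2 * of_nat (Suc k)) :: 'a)"
    by (simp only: fps_binomial_add_mult)
  also have "2 + (- 1 - 2 * of_nat (Suc k)) = (- 1 - 2 * of_nat k :: 'a)" by simp
  finally have B: "(1 + fps_X)^2 * fps_binomial (- 1 - 2 * of_nat (Suc k)) = fps_binomial (- 1 - 2 * of_nat k :: 'a)" .
  have P: "fps_one_minus_X_powr (1 + 2 * of_nat (Suc k) + a)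
      = (1 - fps_X) * fps_one_minus_X_powr (1 + 2 * of_nat k + (a + 1))"
    using fps_one_minus_X_powr_add[of 1 "1 + 2 * of_nat k + (a + 1)"]
    by (simp add: fps_one_minus_X_powr_1 algebra_simps)
  show ?thesis
    unfolding prefactor_fps_def by (simp only: mult.assoc[symmetric] B P) (simp only: mult_ac)
qed

lemma prefactor_fps_scalar_identity:
  fixes a :: "'a::field_char_0" and k :: nat
  defines "K \<equiv> of_nat (Suc k) :: 'a"
  shows "fps_const (K + a/2) * (1 + fps_X)^2
      + fps_X * (fps_const (- 1 - 2 * of_nat k) * (1 - fps_X) - fps_const (1 + 2 * of_nat k + (a + 1)) * (1 + fps_X))
    = (1 - fps_X) * (fps_const (K + a/2) + fps_const (1 + a/2 - K) * fps_X)"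
proof -
  have "fps_const (K + a/2) = fps_const K + fps_const (a/2)"
    "fps_const (- 1 - 2 * of_nat k) = 1 - 2 * fps_const K"
    "fps_const (1 + 2 * of_nat k + (a + 1)) = 2 * fps_const K + 2 * fps_const (a/2)"
    "fps_const (1 + a/2 - K) = 1 + fps_const (a/2) - fps_const K"
    unfolding K_def by (simp_all add: fps_eq_iff fps_numeral_nth algebra_simps)
  note e = this
  show ?thesis unfolding e by (simp add: algebra_simps power2_eq_square)
qed

lemma lhs_fps_compose_Suc:
  fixes a b c :: complex
  assumes "a \<notin> \<int>" "b \<notin> \<int>" "c \<notin> \<int>" "a - b \<notin> \<int>" "a - c \<notin> \<int>"
    and IH: "lhs_fps k (a+1) (b+1) (c+1) oo quadratic_subst_fps
      = prefactor_fps k (a+1) * rhs_fps k (a+1) (b+1) (c+1)"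
  shows "lhs_fps (Suc k) a b c oo quadratic_subst_fps = prefactor_fps (Suc k) a * rhs_fps (Suc k) a b c"
proof -
  define \<alpha> where "\<alpha> = of_nat (Suc k) + a/2"
  define \<beta> where "\<beta> = 1 + a/2 - of_nat (Suc k)"
  let ?Z = "quadratic_subst_fps :: complex fps"
  let ?H = "lhs_fps k (a+1) (b+1) (c+1)" and ?V = "rhs_fps k (a+1) (b+1) (c+1)"
  let ?W = "prefactor_fps k (a+1)"
  have "(1 + fps_X :: complex fps) $ 0 \<noteq> 0" by simp
  then have "(1 + fps_X :: complex fps) \<noteq> 0" by (metis fps_zero_nth)
  moreover have "\<alpha> \<noteq> 0" unfolding \<alpha>_def by (rule not_Ints_of_nat_add_half_neq_0[OF assms(1)])
  ultimately have nz: "fps_const \<alpha> * (1 + fps_X)^2 \<noteq> (0 :: complex fps)" by simp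
  have "fps_const \<alpha> * (lhs_fps (Suc k) a b c oo ?Z) = fps_const \<alpha> * (?H oo ?Z) + ((fps_X * fps_deriv ?H) oo ?Z)"
    using arg_cong[OF lhs_fps_Suc[of k a b c], of "\<lambda>F. F oo ?Z"] unfolding \<alpha>_def
    by (simp add: fps_compose_add_distrib fps_const_mult_apply_left)
  then have "fps_const \<alpha> * (1 + fps_X)^2 * (lhs_fps (Suc k) a b c oo ?Z)
      = (1 + fps_X) * (fps_const \<alpha> * (1 + fps_X) * (?W * ?V) + fps_X * (1 - fps_X) * fps_deriv (?W * ?V))"
    using fps_compose_quadratic_subst_X_deriv[of ?H] unfolding IH[symmetric] power2_eq_square
    by algebra
  also have "\<dots> = ?W * (1 - fps_X) * ((fps_const \<alpha> + fps_const \<beta> * fps_X) * ?V + fps_X * ((1 + fps_X) * fps_deriv ?V))"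
    using fps_deriv_binomial_times_one_minus_X_powr[of "- 1 - 2 * of_nat k" "1 + 2 * of_nat k + (a + 1)"]
      prefactor_fps_scalar_identity[of k a]
    unfolding fps_deriv_mult \<alpha>_def \<beta>_def prefactor_fps_def[symmetric] by algebra
  also have "\<dots> = ?W * (1 - fps_X) * (fps_const \<alpha> * rhs_fps (Suc k) a b c)"
    unfolding \<alpha>_def \<beta>_def rhs_fps_Suc[OF assms(1-5)] ..
  also have "\<dots> = fps_const \<alpha> * (1 + fps_X)^2 * (prefactor_fps (Suc k) a * rhs_fps (Suc k) a b c)"
    using prefactor_fps_Suc[of k a] by algebra
  finally show ?thesis using nz by simp
qed

lemma pochhammer_neg_of_nat_mult_fact:
  assumes "i \<le> n"
  shows "pochhammer (- of_nat n :: 'a::field_char_0) i * fact (n - i) = (-1) ^ i * fact n"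
proof -
  have "fact n = (pochhammer 1 (n - i + i) :: 'a)"
    using assms by (simp add: pochhammer_fact)
  also have "\<dots> = fact (n - i) * pochhammer (1 + of_nat (n - i)) i"
    by (simp add: pochhammer_product' pochhammer_fact)
  also have "1 + of_nat (n - i) = (of_nat n - of_nat i + 1 :: 'a)"
    using assms by (simp add: of_nat_diff)
  finally show ?thesis by (simp add: pochhammer_minus algebra_simps)
qed

lemma pochhammer_half_mult_pochhammer_half_plus_1:
  fixes a :: "'a::field_char_0"
  shows "4 ^ i * pochhammer (1/2 + a/2) i * pochhammer (1 + a/2) i = pochhammer (1 + a) (2 * i)"
proof -
  have "pochhammer (2 * ((1 + a)/2)) (2 * i) = of_nat (2 ^ (2 * i)) * pochhammer ((1 + a)/2) i * pochhammer ((1 + a)/2 + 1/2) i"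
    by (rule pochhammer_double)
  moreover have "2 * ((1 + a)/2) = 1 + a" "(1 + a)/2 = 1/2 + a/2" "(1 + a)/2 + 1/2 = 1 + a/2"
    by (simp_all add: field_simps)
  moreover have "(of_nat (2 ^ (2 * i)) :: 'a) = 4 ^ i" by (simp add: power_mult)
  ultimately show ?thesis by simp
qed

lemma fps_mult_compose_nth:
  fixes M H Z :: "'a::comm_ring_1 fps"
  assumes "Z $ 0 = 0"
  shows "(M * (H oo Z)) $ n = (\<Sum>i\<le>n. H $ i * (Z ^ i * M) $ n)"
proof -
  have "(M * (H oo Z)) $ n = (\<Sum>m\<le>n. (H oo Z) $ m * M $ (n - m))"
    by (simp add: mult.commute[of M] fps_mult_nth atLeast0AtMost)
  also have "\<dots> = (\<Sum>m\<le>n. \<Sum>i\<le>n. H $ i * (Z ^ i) $ m * M $ (n - m))"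
  proof (intro sum.cong refl)
    fix m assume "m \<in> {..n}"
    then have "(H oo Z) $ m = (\<Sum>i\<le>n. H $ i * (Z ^ i) $ m)"
      unfolding fps_compose_nth atLeast0AtMost using startsby_zero_power_prefix[OF assms]
      by (intro sum.mono_neutral_left) auto
    then show "(H oo Z) $ m * M $ (n - m) = (\<Sum>i\<le>n. H $ i * (Z ^ i) $ m * M $ (n - m))"
      by (simp add: sum_distrib_right)
  qed
  also have "\<dots> = (\<Sum>i\<le>n. H $ i * (Z ^ i * M) $ n)"
    by (subst sum.swap) (simp add: fps_mult_nth atLeast0AtMost sum_distrib_left mult.assoc)
  finally show ?thesis .
qed

lemma one_plus_X_times_one_minus_X_powr_nth:
  fixes t :: "'a::field_char_0"
  shows "t * ((1 + fps_X) * fps_one_minus_X_powr (- t - 1)) $ j = pochhammer t j * (t + 2 * of_nat j) / fact j"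
proof (cases j)
  case 0
  then show ?thesis by (simp add: fps_one_minus_X_powr_nth)
next
  case (Suc m)
  have "(1 + fps_X) * fps_one_minus_X_powr (- t - 1) = fps_one_minus_X_powr (- t - 1) + fps_X * fps_one_minus_X_powr (- t - 1)"
    by (simp add: algebra_simps)
  then have "t * ((1 + fps_X) * fps_one_minus_X_powr (- t - 1)) $ j
      = t * pochhammer (t + 1) (Suc m) / fact (Suc m) + t * pochhammer (t + 1) m / fact m"
    by (simp add: Suc fps_one_minus_X_powr_nth algebra_simps)
  also have "t * pochhammer (t + 1) (Suc m) = pochhammer t (Suc m) * (t + of_nat (Suc m))"
    using pochhammer_plus_1_mult[of t "Suc m"] by (simp only: mult.commute)
  also have "t * pochhammer (t + 1) m = pochhammer t (Suc m)"
    using pochhammer_plus_1_mult[of t m] by (simp add: pochhammer_Suc mult.commute)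
  also have "pochhammer t (Suc m) / fact m = pochhammer t (Suc m) * of_nat (Suc m) / fact (Suc m)"
    using of_nat_neq_0[of m, where 'a='a] by simp
  also have "pochhammer t (Suc m) * (t + of_nat (Suc m)) / fact (Suc m) + pochhammer t (Suc m) * of_nat (Suc m) / fact (Suc m)
      = pochhammer t j * (t + 2 * of_nat j) / fact j"
    unfolding Suc add_divide_distrib[symmetric] by (simp add: algebra_simps)
  finally show ?thesis .
qed

lemma quadratic_subst_power_times_nth:
  fixes a :: "'a::field_char_0"
  assumes "i \<le> n"
  shows "a * pochhammer (1 + a) (2 * i) * (quadratic_subst_fps ^ i * ((1 + fps_X) * fps_one_minus_X_powr (- a - 1))) $ n
    = (-4) ^ i * pochhammer a (n + i) * (a + 2 * of_nat n) / fact (n - i)"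
proof -
  define t where "t = a + 2 * of_nat i"
  have eq: "quadratic_subst_fps ^ i * ((1 + fps_X) * fps_one_minus_X_powr (- a - 1))
      = fps_const ((-4) ^ i) * (fps_X ^ i * ((1 + fps_X) * fps_one_minus_X_powr (- t - 1)))"
    unfolding quadratic_subst_fps_power t_def
    by (simp add: fps_one_minus_X_powr_add[symmetric] algebra_simps)
  have coeff: "(quadratic_subst_fps ^ i * ((1 + fps_X) * fps_one_minus_X_powr (- a - 1))) $ n
      = (-4) ^ i * ((1 + fps_X) * fps_one_minus_X_powr (- t - 1)) $ (n - i)"
    unfolding eq fps_mult_left_const_nth fps_X_power_mult_nth using assms by simp
  have a: "a * pochhammer (1 + a) (2 * i) = pochhammer a (2 * i) * t"
    using pochhammer_plus_1_mult[of a "2 * i"] unfolding t_def by (simp add: add.commute mult.commute)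
  have "2 * i + (n - i) = n + i" using assms by simp
  then have prod: "pochhammer a (2 * i) * pochhammer t (n - i) = pochhammer a (n + i)"
    using pochhammer_product'[of a "2 * i" "n - i"] unfolding t_def by (simp add: add.commute)
  have sum: "t + 2 * of_nat (n - i) = a + 2 * of_nat n"
    using assms unfolding t_def by (simp add: of_nat_diff algebra_simps)
  have "a * pochhammer (1 + a) (2 * i) * (quadratic_subst_fps ^ i * ((1 + fps_X) * fps_one_minus_X_powr (- a - 1))) $ n
      = (-4) ^ i * pochhammer a (2 * i) * (t * ((1 + fps_X) * fps_one_minus_X_powr (- t - 1)) $ (n - i))"
    unfolding coeff a by (simp only: mult_ac)
  also have "\<dots> = (-4) ^ i * (pochhammer a (2 * i) * pochhammer t (n - i)) * (t + 2 * of_nat (n - i)) / fact (n - i)"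
    unfolding one_plus_X_times_one_minus_X_powr_nth by (simp add: mult_ac)
  finally show ?thesis unfolding prod sum .
qed

lemma lhs_fps_0_times_quadratic_subst_power_nth:
  fixes a b c :: complex
  assumes "a \<noteq> 0" "i \<le> n"
  shows "lhs_fps 0 a b c $ i * (quadratic_subst_fps ^ i * ((1 + fps_X) * fps_one_minus_X_powr (- a - 1))) $ n
    = (a + 2 * of_nat n) / a * pochhammer a n / fact n
      * hyp3F2_coeff (- of_nat n) (a + of_nat n) (1 + a - b - c) (1 + a - b) (1 + a - c) i"
proof -
  define E where "E = (quadratic_subst_fps ^ i * ((1 + fps_X) * fps_one_minus_X_powr (- a - 1))) $ n"
  define PP where "PP = pochhammer (1/2 + a/2) i * pochhammer (1 + a/2 :: complex) i"
  have "a * (4 ^ i * PP) * E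
      = (-1) ^ i * 4 ^ i * (pochhammer a n * pochhammer (a + of_nat n) i) * (a + 2 * of_nat n) / fact (n - i)"
    using quadratic_subst_power_times_nth[OF assms(2), of a]
    unfolding E_def PP_def pochhammer_half_mult_pochhammer_half_plus_1[symmetric] mult.assoc
      pochhammer_product'
    by (simp add: power_mult_distrib[symmetric])
  then have "4 ^ i * (a * PP * E)
      = 4 ^ i * ((-1) ^ i * (pochhammer a n * pochhammer (a + of_nat n) i) * (a + 2 * of_nat n) / fact (n - i))"
    by (simp only: times_divide_eq_right mult_ac)
  then have "a * PP * E = (-1) ^ i * (pochhammer a n * pochhammer (a + of_nat n) i) * (a + 2 * of_nat n) / fact (n - i)"
    by (rule mult_left_cancel[THEN iffD1, rotated]) simp
  then have "PP * E = (-1) ^ i / fact (n - i) * (pochhammer a n * pochhammer (a + of_nat n) i) * (a + 2 * of_nat n) / a"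
    using assms(1) by (simp add: field_simps)
  also have "(-1) ^ i / fact (n - i) = pochhammer (- of_nat n) i / (fact n :: complex)"
    using pochhammer_neg_of_nat_mult_fact[OF assms(2), where 'a=complex] by (simp add: field_simps)
  finally have key: "PP * E
      = (a + 2 * of_nat n) / a * pochhammer a n / fact n * (pochhammer (- of_nat n) i * pochhammer (a + of_nat n) i)"
    by (simp add: mult_ac)
  have "lhs_fps 0 a b c $ i * E
      = PP * E * (pochhammer (1 + a - b - c) i / (pochhammer (1 + a - b) i * pochhammer (1 + a - c) i * fact i))"
    by (simp add: lhs_fps_def fps_hyp3F2_def hyp3F2_coeff_def PP_def mult_ac)
  then show ?thesis unfolding E_def[symmetric] key by (simp add: hyp3F2_coeff_def mult_ac)
qed

lemma lhs_fps_0_compose_quadratic_subst: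
  fixes a b c :: complex
  assumes "a \<notin> \<int>" "a - b \<notin> \<int>" "a - c \<notin> \<int>"
  shows "lhs_fps 0 a b c oo quadratic_subst_fps = prefactor_fps 0 a * rhs_fps 0 a b c"
proof -
  let ?M = "(1 + fps_X) * fps_one_minus_X_powr (- a - 1) :: complex fps"
  have a: "a \<noteq> 0" using assms(1) by auto
  have "1 + a - b \<notin> \<int>" "1 + a - c \<notin> \<int>"
    using assms(2,3) by (metis Ints_1 add_in_Ints_iff_left add_diff_eq)+
  then have "(\<Sum>i\<le>n. hyp3F2_coeff (- of_nat n) (a + of_nat n) ((1 + a - b) + (1 + a - c) - 1 - a) (1 + a - b) (1 + a - c) i)
      = pochhammer (1 + a - (1 + a - b)) n * pochhammer (1 + a - (1 + a - c)) n
        / (pochhammer (1 + a - b) n * pochhammer (1 + a - c) n)" for n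
    using assms(1) by (intro pfaff_saalschutz) (auto simp: not_Ints_add_of_nat_neq_0)
  then have saalschutz: "(\<Sum>i\<le>n. hyp3F2_coeff (- of_nat n) (a + of_nat n) (1 + a - b - c) (1 + a - b) (1 + a - c) i)
      = pochhammer b n * pochhammer c n / (pochhammer (1 + a - b) n * pochhammer (1 + a - c) n)" for n
    by (simp add: algebra_simps)
  have "?M * (lhs_fps 0 a b c oo quadratic_subst_fps) = rhs_fps 0 a b c"
  proof (rule fps_ext)
    fix n
    have "(?M * (lhs_fps 0 a b c oo quadratic_subst_fps)) $ n
        = (\<Sum>i\<le>n. lhs_fps 0 a b c $ i * (quadratic_subst_fps ^ i * ?M) $ n)"
      by (rule fps_mult_compose_nth) simp
    also have "\<dots> = (\<Sum>i\<le>n. (a + 2 * of_nat n) / a * pochhammer a n / fact n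
        * hyp3F2_coeff (- of_nat n) (a + of_nat n) (1 + a - b - c) (1 + a - b) (1 + a - c) i)"
      using lhs_fps_0_times_quadratic_subst_power_nth[OF a] by (intro sum.cong) auto
    also have "\<dots> = (a + 2 * of_nat n) / a * pochhammer a n / fact n
        * (\<Sum>i\<le>n. hyp3F2_coeff (- of_nat n) (a + of_nat n) (1 + a - b - c) (1 + a - b) (1 + a - c) i)"
      by (simp only: sum_distrib_left)
    also have "\<dots> = rhs_fps 0 a b c $ n"
      using a unfolding saalschutz by (simp add: rhs_fps_def hyp3F2_coeff_def field_simps)
    finally show "(?M * (lhs_fps 0 a b c oo quadratic_subst_fps)) $ n = rhs_fps 0 a b c $ n" .
  qed
  moreover have "prefactor_fps 0 a * ?M = 1"
  proof -
    have "fps_binomial (-1) * (1 + fps_X) = (1 :: complex fps)"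
      using fps_binomial_add_mult[of "-1" 1] by (simp add: fps_binomial_1)
    moreover have "fps_one_minus_X_powr (1 + a) * fps_one_minus_X_powr (- a - 1) = 1"
      using fps_one_minus_X_powr_add[of "1 + a" "- a - 1"] by simp
    ultimately show ?thesis unfolding prefactor_fps_def by (simp add: algebra_simps)
  qed
  ultimately show ?thesis by (metis mult.assoc mult_1)
qed

theorem lhs_fps_compose_quadratic_subst:
  fixes a b c :: complex
  assumes "a \<notin> \<int>" "b \<notin> \<int>" "c \<notin> \<int>" "a - b \<notin> \<int>" "a - c \<notin> \<int>"
  shows "lhs_fps k a b c oo quadratic_subst_fps = prefactor_fps k a * rhs_fps k a b c"
  using assms
proof (induction k arbitrary: a b c)
  case 0
  then show ?case by (intro lhs_fps_0_compose_quadratic_subst) auto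
next
  case (Suc k)
  then show ?case by (intro lhs_fps_compose_Suc Suc.IH) simp_all
qed

lemma has_fps_expansion_prefactor:
  "(\<lambda>x::complex. inverse ((1 + x) ^ (1 + 2 * k)) * (1 - x) powr (1 + 2 * of_nat k + a))
    has_fps_expansion prefactor_fps k a"
proof -
  have "fps_binomial (- 1 - 2 * of_nat k) = inverse ((1 + fps_X) ^ (1 + 2 * k) :: complex fps)"
    using fps_binomial_minus_of_nat[of "1 + 2 * k"] by simp
  moreover have "(\<lambda>x::complex. inverse ((1 + x) ^ (1 + 2 * k)) * (1 - x) powr (1 + 2 * of_nat k + a))
      has_fps_expansion inverse ((1 + fps_X) ^ (1 + 2 * k)) * fps_one_minus_X_powr (1 + 2 * of_nat k + a)"
    by (intro has_fps_expansion_mult has_fps_expansion_inverse has_fps_expansion_one_minus_powr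
        fps_expansion_intros) simp
  ultimately show ?thesis unfolding prefactor_fps_def by simp
qed

lemma eval_rhs_fps:
  "eval_fps (rhs_fps k a b c) x = (\<Sum>n. pochhammer a n * pochhammer b n * pochhammer c n
      / (fact n * pochhammer (1 + a - b) n * pochhammer (1 + a - c) n)
      * ((1 + 2 * of_nat n / a) * poly (Qhat k a b c) (of_nat n)) * x ^ n)"
  by (simp add: eval_fps_def rhs_fps_def hyp3F2_coeff_def mult_ac)

lemma hyp3F2_quadratic_transformation:
  fixes a b c :: complex
  assumes "a \<notin> \<int>" "b \<notin> \<int>" "c \<notin> \<int>" "a - b \<notin> \<int>" "a - c \<notin> \<int>"
  shows "eventually (\<lambda>x. hyp3F2 (1/2 + of_nat k + a/2) (1 + of_nat k + a/2) (1 - of_nat k + a - b - c)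
      (1 + a - b) (1 + a - c) (- 4 * x / (1 - x)^2)
    = inverse ((1 + x) ^ (1 + 2 * k)) * (1 - x) powr (1 + 2 * of_nat k + a) * eval_fps (rhs_fps k a b c) x) (nhds 0)"
proof -
  let ?F = "lhs_fps k a b c" and ?U = "rhs_fps k a b c" and ?s = "1 + 2 * of_nat k + a"
  have "(eval_fps ?F \<circ> (\<lambda>x. - 4 * x / (1 - x)^2)) has_fps_expansion (?F oo quadratic_subst_fps)"
    using fps_conv_radius_hyp3F2_pos unfolding lhs_fps_def
    by (intro has_fps_expansion_compose eval_fps_has_fps_expansion has_fps_expansion_quadratic_subst) simp_all
  then have F: "(\<lambda>x. eval_fps ?F (- 4 * x / (1 - x)^2)) has_fps_expansion prefactor_fps k a * ?U"
    using lhs_fps_compose_quadratic_subst[OF assms] by (simp add: o_def)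
  have "fps_binomial (of_nat (1 + 2 * k)) * fps_one_minus_X_powr (- ?s) * prefactor_fps k a = 1"
    unfolding prefactor_fps_def
    using fps_binomial_add_mult[of "of_nat (1 + 2 * k)" "- 1 - 2 * of_nat k :: complex"]
      fps_one_minus_X_powr_add[of "- ?s" ?s]
    by (simp add: algebra_simps)
  moreover have "(\<lambda>x. (1 + x) ^ (1 + 2 * k) * (1 - x) powr (- ?s) * eval_fps ?F (- 4 * x / (1 - x)^2))
      has_fps_expansion fps_binomial (of_nat (1 + 2 * k)) * fps_one_minus_X_powr (- ?s) * (prefactor_fps k a * ?U)"
    unfolding fps_binomial_of_nat
    by (intro has_fps_expansion_mult has_fps_expansion_one_minus_powr F fps_expansion_intros)
  ultimately have "fps_conv_radius ?U > 0"
    unfolding has_fps_expansion_def by (simp add: mult.assoc[symmetric])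
  then have "(\<lambda>x. inverse ((1 + x) ^ (1 + 2 * k)) * (1 - x) powr ?s * eval_fps ?U x)
      has_fps_expansion prefactor_fps k a * ?U"
    by (intro has_fps_expansion_mult has_fps_expansion_prefactor eval_fps_has_fps_expansion)
  with F have "eventually (\<lambda>x. eval_fps ?F (- 4 * x / (1 - x)^2)
      = inverse ((1 + x) ^ (1 + 2 * k)) * (1 - x) powr ?s * eval_fps ?U x) (nhds 0)"
    unfolding has_fps_expansion_def by (auto elim: eventually_elim2)
  then show ?thesis by (simp add: lhs_fps_def hyp3F2_eq_eval_fps)
qed

theorem theorem7:
  fixes a b c :: complex and k :: nat
  assumes "a \<notin> \<int>" and "b \<notin> \<int>" and "c \<notin> \<int>"
    and "a - b \<notin> \<int>" and "a - c \<notin> \<int>"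
  shows "(k \<ge> 1 \<longrightarrow> (\<forall>n::complex.
            (of_nat k + a/2) * (1 + a) * b * c * (n + a/2) * poly (Qhat k a b c) n
          = (n + of_nat k + a/2) * (n + a) * (n + b) * (n + c) * (n + 1/2 + a/2)
              * poly (Qhat (k - 1) (a+1) (b+1) (c+1)) n
          + (n - of_nat k + a/2) * n * (n + a - b) * (n + a - c) * (n - 1/2 + a/2)
              * poly (Qhat (k - 1) (a+1) (b+1) (c+1)) (n - 1)))
    \<and> degree (Qhat k a b c) = 4 * k
    \<and> (\<exists>R. degree R = 2 * k \<and> Qhat k a b c = pcompose R [:0, a, 1:])
    \<and> (\<exists>r>0. \<forall>x::complex. norm x < r \<longrightarrow>
          hyp3F2 (1/2 + of_nat k + a/2) (1 + of_nat k + a/2) (1 - of_nat k + a - b - c)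
                 (1 + a - b) (1 + a - c) (- 4 * x / (1 - x)^2)
        = inverse ((1 + x) ^ (1 + 2 * k)) * (1 - x) powr (1 + 2 * of_nat k + a)
          * (\<Sum>n. pochhammer a n * pochhammer b n * pochhammer c n
                 / (fact n * pochhammer (1 + a - b) n * pochhammer (1 + a - c) n)
                 * ((1 + 2 * of_nat n / a) * poly (Qhat k a b c) (of_nat n)) * x ^ n))"
  using Qhat_raising_relation[OF assms(1-3)] Qhat_invariants[OF assms(1-3)] Qhat_eq_pcompose[OF assms(1-3)]
      hyp3F2_quadratic_transformation[OF assms, of k, unfolded eval_rhs_fps eventually_nhds_metric dist_norm diff_zero]
  by blast

end
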